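(* Let $k\ge 2$, $w=2^k-1$, $v=2^{k-1}$. Consider a rectangular region of cells $(c,r)$ with columns $c\in\{0,\dots,2v-1\}$ and rows $r\in\{-1,0,\dots,w\}$ (rows increase downward), all cells outside this region being unavailable. Row $-1$: the frog stands on $(0,-1)$ and all other cells of the row are blocked. Rows $0,\dots,w-1$: all cells empty. Row $w$: cells $(0,w)$ and $(2v-1,w)$ are empty, all others blocked. For $j\ge1$ let $\tilde U_j$ be the sequence of $2^j-1$ vertical jumps $(0,1)$ followed by one vertical jump $(0,2^j+2^{j-1}-1)$, and $\tilde U_j^R$ its reverse. Let $\tilde V'=\tilde U_{k-1},\dots,\tilde U_1$ and $\tilde V''=\tilde U_1^R,\dots,\tilde U_{k-1}^R$, and consider the jump sequence $$\tilde V=(0,v),\ \tilde V',\ (1,0),\ \tilde V'',\ (1,0),\ \tilde V',\ (1,0),\ \tilde V'',\ (1,0),\ \dots,\ (1,0),\ \tilde V',\ (1,0),\ \tilde V'',\ (0,v),\ (2v-1,0),$$ which contains $v$ blocks of the form $\tilde V',(1,0),\tilde V''$ separated by single jumps $(1,0)$. Then for every choice of pairwise distinct even rows $r_1,\dots,r_v\in\{0,2,\dots,w-1\}$ there is a valid execution of $\tilde V$ in which, for each $i=1,\dots,v$, the jump $(1,0)$ inside the $i$-th block is made within row $r_i$, and at the end all cells of rows $0,\dots,w-1$ and the cell $(2v-1,w)$ are visited and the frog stands on $(0,w)$.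
   Context: A frog on a grid performs a given sequence of jumps $(dx,dy)$; for each jump it chooses a sign $s\in\{-1,+1\}$ and moves from $(x,y)$ to $(x+s\,dx,\,y+s\,dy)$. An execution is valid if every landing cell is an available (non-blocked) cell of the region that has not been visited before (the starting cell counts as visited). *)

theory Defs
  imports Main
begin

(* Cells are pairs (c, r) :: int * int (column, row; rows increase downward).
   A jump (dx, dy) with sign s moves (x, y) to (x + s*dx, y + s*dy). *)

fun exec_path :: "int \<times> int \<Rightarrow> ((int \<times> int) \<times> int) list \<Rightarrow> (int \<times> int) list" where
  "exec_path p [] = [p]"
| "exec_path p (((dx, dy), s) # rest) = p # exec_path (fst p + s * dx, snd p + s * dy) rest"

definition positions :: "int \<times> int \<Rightarrow> (int \<times> int) list \<Rightarrow> int list \<Rightarrow> (int \<times> int) list" where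
  "positions start js ss = exec_path start (zip js ss)"

definition valid_exec :: "(int \<times> int) set \<Rightarrow> int \<times> int \<Rightarrow> (int \<times> int) list \<Rightarrow> int list \<Rightarrow> bool" where
  "valid_exec A start js ss \<longleftrightarrow>
     length ss = length js \<and> set ss \<subseteq> {-1, 1} \<and>
     set (tl (positions start js ss)) \<subseteq> A \<and> distinct (positions start js ss)"

definition region :: "nat \<Rightarrow> (int \<times> int) set" where
  "region k = (let v = (2::int)^(k-1); w = (2::int)^k - 1 in
     {(c, r). 0 \<le> c \<and> c \<le> 2*v - 1 \<and> -1 \<le> r \<and> r \<le> w})"

definition blocked :: "nat \<Rightarrow> (int \<times> int) set" where
  "blocked k = (let v = (2::int)^(k-1); w = (2::int)^k - 1 in
     {(c, r). (r = -1 \<and> c \<noteq> 0) \<or> (r = w \<and> c \<noteq> 0 \<and> c \<noteq> 2*v - 1)})"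

definition available :: "nat \<Rightarrow> (int \<times> int) set" where
  "available k = region k - blocked k"

definition Ut :: "nat \<Rightarrow> (int \<times> int) list" where
  "Ut j = replicate (2^j - 1) (0, 1) @ [(0, 2^j + 2^(j-1) - 1)]"

definition Vp :: "nat \<Rightarrow> (int \<times> int) list" where
  "Vp k = concat (map Ut (rev [1..<k]))"

definition Vpp :: "nat \<Rightarrow> (int \<times> int) list" where
  "Vpp k = concat (map (\<lambda>j. rev (Ut j)) [1..<k])"

definition block :: "nat \<Rightarrow> (int \<times> int) list" where
  "block k = Vp k @ [(1, 0)] @ Vpp k"

definition Vt :: "nat \<Rightarrow> (int \<times> int) list" where
  "Vt k = (let v = (2::nat)^(k-1) in
     [(0, int v)] @ block k @ concat (replicate (v - 1) ([(1, 0)] @ block k))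
     @ [(0, int v), (2 * int v - 1, 0)])"

(* index (0-based, in Vt k) of the jump (1,0) inside the i-th block, i = 1..v *)
definition mid_jump_index :: "nat \<Rightarrow> nat \<Rightarrow> nat" where
  "mid_jump_index k i = 1 + (i - 1) * (length (block k) + 1) + length (Vp k)"

end

theory Submission
  imports Defs
begin

(* Block i sweeps the columns 2i-2 and 2i-1. In the first of them the jumps of V~' realise a
   walk that starts in the middle row v-1, visits each of the rows 0..w-1 exactly once and
   stops in the prescribed even row r_i. After the jump (1,0), the jumps of V~'' are those of
   V~' in reverse order, so taking the opposite signs retraces the walk in the second column
   back to row v-1, where the separating jump (1,0) starts the next block. Such walks exist by
   induction on the height: the unit steps of U~_m sweep the upper half of the column and its
   long jump lands on the middle row of the lower half; rows in the upper half are reached by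
   reflecting a walk about the middle row. The last two jumps visit (2v-1,w) and end at (0,w). *)

fun walk :: "int \<Rightarrow> int list \<Rightarrow> int list" where
  "walk y [] = [y]"
| "walk y (d # ds) = y # walk (y + d) ds"

lemma walk_not_Nil [simp]: "walk y ds \<noteq> []"
  by (cases ds) auto

lemma hd_walk [simp]: "hd (walk y ds) = y"
  by (cases ds) auto

lemma length_walk [simp]: "length (walk y ds) = Suc (length ds)"
  by (induction ds arbitrary: y) auto

lemma walk_snoc: "walk y (ds @ [d]) = walk y ds @ [last (walk y ds) + d]"
  by (induction ds arbitrary: y) auto

lemma walk_replicate_one:
  "walk y (replicate n 1 @ d # ds) = [y..y + int n] @ walk (y + int n + d) ds"
proof (induction n arbitrary: y)
  case 0
  then show ?case by simp
next
  case (Suc n)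
  then show ?case by (simp add: upto_rec1 algebra_simps)
qed

lemma walk_reflect: "walk (a - y) (map uminus ds) = map (\<lambda>x. a - x) (walk y ds)"
  by (induction ds arbitrary: y) (auto simp: algebra_simps)

lemma walk_backwards: "walk (last (walk y ds)) (rev (map uminus ds)) = rev (walk y ds)"
proof (induction ds arbitrary: y)
  case Nil
  then show ?case by simp
next
  case (Cons d ds)
  have "last (rev (walk (y + d) ds)) = y + d"
    by (simp add: last_rev)
  with Cons show ?case by (simp add: walk_snoc)
qed

lemma exec_path_not_Nil [simp]: "exec_path p js \<noteq> []"
  by (cases "(p, js)" rule: exec_path.cases) auto

lemma exec_path_append_jump:
  "exec_path p (js @ ((dx, dy), s) # rest) =
     exec_path p js @ exec_path (fst (last (exec_path p js)) + s * dx, snd (last (exec_path p js)) + s * dy) rest"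
  by (induction p js rule: exec_path.induct) auto

lemma exec_path_vertical:
  "length ss = length ds \<Longrightarrow>
     exec_path (x, y) (zip (map (Pair 0) ds) ss) = map (Pair x) (walk y (map2 (*) ss ds))"
  by (induction ds arbitrary: ss y) (auto simp: length_Suc_conv mult.commute)

definition Ut_dy :: "nat \<Rightarrow> int list" where
  "Ut_dy j = replicate (2^j - 1) 1 @ [2^j + 2^(j-1) - 1]"

definition Vp_dy :: "nat \<Rightarrow> int list" where
  "Vp_dy m = concat (map Ut_dy (rev [1..<m]))"

lemma Vp_eq_map_Pair: "Vp m = map (Pair 0) (Vp_dy m)"
proof -
  have "Ut = map (Pair 0) \<circ> Ut_dy"
    by (auto simp: Ut_def Ut_dy_def)
  then show ?thesis
    by (simp add: Vp_def Vp_dy_def map_concat)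
qed

lemma Vpp_eq_rev_Vp: "Vpp m = rev (Vp m)"
  by (simp add: Vpp_def Vp_def rev_concat rev_map comp_def)

lemma Vp_dy_Suc: "1 \<le> m \<Longrightarrow> Vp_dy (Suc m) = Ut_dy m @ Vp_dy m"
  by (simp add: Vp_dy_def)

lemma length_Vp_dy: "1 \<le> m \<Longrightarrow> length (Vp_dy m) = 2^m - 2"
proof (induction m rule: nat_induct_at_least)
  case base
  then show ?case by (simp add: Vp_dy_def)
next
  case (Suc m)
  have "(2::nat) \<le> 2^m"
    using Suc.hyps by (metis power_increasing power_one_right one_le_numeral)
  with Suc show ?case by (simp add: Vp_dy_Suc Ut_dy_def)
qed

lemma two_power_pred: "1 \<le> m \<Longrightarrow> (2::int)^m = 2 * 2^(m-1)"
  by (cases m) auto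

definition column_walk :: "nat \<Rightarrow> int list \<Rightarrow> int list" where
  "column_walk m ss = walk (2^(m-1) - 1) (map2 (*) ss (Vp_dy m))"

definition column_route :: "nat \<Rightarrow> int list \<Rightarrow> int \<Rightarrow> bool" where
  "column_route m ss r \<longleftrightarrow> length ss = length (Vp_dy m) \<and> set ss \<subseteq> {-1, 1} \<and>
     distinct (column_walk m ss) \<and> set (column_walk m ss) = {0..2^m - 2} \<and> last (column_walk m ss) = r"

lemma column_walk_not_Nil [simp]: "column_walk m ss \<noteq> []"
  by (simp add: column_walk_def)

(* The unit steps of U~_m sweep the upper half of the taller column; its long jump lands on the
   middle row of the lower half, where the route for height m takes over. *)
lemma column_route_Suc:
  assumes "1 \<le> m" and "column_route m ss r"
  shows "column_route (Suc m) (replicate (2^m - 1) 1 @ (-1) # ss) r"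
proof -
  define n :: nat where "n = 2^m - 1"
  note two_pow = two_power_pred[OF assms(1)]
  have n: "int n = 2^m - 1"
    by (simp add: n_def of_nat_diff)
  have "map2 (*) (replicate n 1 @ (-1) # ss) (Vp_dy (Suc m)) =
      replicate n 1 @ (1 - 2^m - 2^(m-1)) # map2 (*) ss (Vp_dy m)"
    using assms(1) by (simp add: Vp_dy_Suc Ut_dy_def n_def zip_replicate)
  then have walk_Suc: "column_walk (Suc m) (replicate n 1 @ (-1) # ss) =
      [2^m - 1..2^Suc m - 2] @ column_walk m ss"
    using n two_pow by (simp add: column_walk_def walk_replicate_one)
  have "{2^m - 1..2^Suc m - 2} \<inter> {0..2^m - 2} = ({} :: int set)"
    by auto
  moreover have "{2^m - 1..2^Suc m - 2} \<union> {0..2^m - 2} = ({0..2^Suc m - 2} :: int set)"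
    using two_pow by auto
  moreover have "length (Vp_dy (Suc m)) = n + 1 + length (Vp_dy m)"
    using assms(1) by (simp add: Vp_dy_Suc Ut_dy_def n_def)
  ultimately show ?thesis
    using assms(2) unfolding column_route_def walk_Suc n_def[symmetric] by auto
qed

(* The walk starts in the middle row, so negating every sign mirrors it about that row. *)
lemma column_route_reflect:
  assumes "1 \<le> m" and "column_route m ss r"
  shows "column_route m (map uminus ss) (2^m - 2 - r)"
proof -
  have centre: "(2^m - 2) - (2^(m-1) - 1) = (2^(m-1) - 1 :: int)"
    using two_power_pred[OF assms(1)] by simp
  have signs: "map2 (*) (map uminus ss) (Vp_dy m) = map uminus (map2 (*) ss (Vp_dy m))"
    by (simp add: zip_map1 split_def)
  have "column_walk m (map uminus ss) =
      walk ((2^m - 2) - (2^(m-1) - 1)) (map uminus (map2 (*) ss (Vp_dy m)))"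
    unfolding column_walk_def centre signs ..
  also have "\<dots> = map (\<lambda>x. (2^m - 2) - x) (column_walk m ss)"
    unfolding column_walk_def by (rule walk_reflect)
  finally have reflected: "column_walk m (map uminus ss) = map (\<lambda>x. (2^m - 2) - x) (column_walk m ss)" .
  have "(\<lambda>x. (2^m - 2) - x) ` {0..2^m - 2} = ({0..2^m - 2} :: int set)"
    by (auto intro: image_eqI[where x = "2^m - 2 - x" for x])
  then show ?thesis
    using assms(2) unfolding column_route_def reflected
    by (auto simp: distinct_map inj_on_def last_map)
qed

lemma column_route_exists:
  assumes "1 \<le> m" and "even r" and "0 \<le> r" and "r \<le> 2^m - 2"
  shows "\<exists>ss. column_route m ss r"
  using assms
proof (induction m arbitrary: r rule: nat_induct_at_least)
  case base
  then have "column_route 1 [] r"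
    by (simp add: column_route_def column_walk_def Vp_dy_def)
  then show ?case ..
next
  case (Suc m)
  have two_pow: "(2::int)^Suc m = 2 * 2^m" and odd_pow: "odd ((2::int)^m - 1)"
    using Suc.hyps by simp_all
  show ?case
  proof (cases "r \<le> 2^m - 2")
    case True
    with Suc obtain ss where "column_route m ss r"
      by blast
    then show ?thesis
      using column_route_Suc[OF Suc.hyps] by blast
  next
    case False
    moreover have "r \<noteq> 2^m - 1"
      using Suc.prems(1) odd_pow by blast
    ultimately have "2^m \<le> r"
      by linarith
    with Suc.prems two_pow obtain ss where "column_route m ss (2^Suc m - 2 - r)"
      using Suc.IH[of "2^Suc m - 2 - r"] by auto
    then have "column_route (Suc m) (map uminus (replicate (2^m - 1) 1 @ (-1) # ss))
        (2^Suc m - 2 - (2^Suc m - 2 - r))"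
      using Suc.hyps by (intro column_route_reflect column_route_Suc) auto
    then show ?thesis
      by auto
  qed
qed

definition block_signs :: "int list \<Rightarrow> int list" where
  "block_signs ss = ss @ 1 # rev (map uminus ss)"

definition column_pair_path :: "int \<Rightarrow> int list \<Rightarrow> (int \<times> int) list" where
  "column_pair_path x P = map (Pair x) P @ map (Pair (x + 1)) (rev P)"

lemma exec_path_block:
  assumes "length ss = length (Vp_dy m)"
  shows "exec_path (x, 2^(m-1) - 1) (zip (block m) (block_signs ss)) =
    column_pair_path x (column_walk m ss)"
proof -
  define D where "D = map2 (*) ss (Vp_dy m)"
  have jumps: "zip (block m) (block_signs ss) =
      zip (map (Pair 0) (Vp_dy m)) ss @
      ((1, 0), 1) # zip (map (Pair 0) (rev (Vp_dy m))) (rev (map uminus ss))"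
    using assms by (simp add: block_def block_signs_def Vp_eq_map_Pair Vpp_eq_rev_Vp rev_map)
  have reversed: "map2 (*) (rev (map uminus ss)) (rev (Vp_dy m)) = rev (map uminus D)"
    using assms by (simp add: D_def zip_rev[symmetric] zip_map1 rev_map split_def)
  show ?thesis
    using assms walk_backwards[of "2^(m-1) - 1" D]
    by (simp add: jumps exec_path_append_jump exec_path_vertical last_map reversed
        column_pair_path_def column_walk_def D_def)
qed

lemma hd_column_walk [simp]: "hd (column_walk m ss) = 2^(m-1) - 1"
  by (simp add: column_walk_def)

lemma column_pair_path_not_Nil [simp]: "P \<noteq> [] \<Longrightarrow> column_pair_path x P \<noteq> []"
  by (simp add: column_pair_path_def)

lemma last_column_pair_path: "P \<noteq> [] \<Longrightarrow> last (column_pair_path x P) = (x + 1, hd P)"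
  by (simp add: column_pair_path_def last_map last_rev)

lemma set_column_pair_path: "set (column_pair_path x P) = {x, x + 1} \<times> set P"
  by (auto simp: column_pair_path_def)

lemma length_column_pair_path: "length (column_pair_path x P) = 2 * length P"
  by (simp add: column_pair_path_def)

lemma nth_column_pair_path_last: "P \<noteq> [] \<Longrightarrow> column_pair_path x P ! (length P - 1) = (x, last P)"
  by (simp add: column_pair_path_def nth_append last_conv_nth)

lemma nth_column_pair_path_turn: "P \<noteq> [] \<Longrightarrow> column_pair_path x P ! length P = (x + 1, last P)"
  by (simp add: column_pair_path_def nth_append last_conv_nth rev_nth)

lemma UN_column_pairs: "(\<Union>i<n. {2 * int i, 2 * int i + 1}) = {0..2 * int n - 1}"
  by (induction n) (auto simp: lessThan_Suc)

lemma nth_concat_map_upt: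
  assumes "\<And>i. i < n \<Longrightarrow> length (f i) = M" and "j < n" and "t < M"
  shows "concat (map f [0..<n]) ! (j * M + t) = f j ! t"
  using assms
proof (induction n)
  case 0
  then show ?case by simp
next
  case (Suc n)
  have "map (length \<circ> f) [0..<n] = replicate n M"
    using Suc.prems(1) by (intro nth_equalityI) auto
  then have "length (concat (map f [0..<n])) = n * M"
    by (simp add: length_concat sum_list_replicate)
  moreover have "j * M + t < n * M" if "j < n"
  proof -
    have "Suc j * M \<le> n * M"
      using that by (intro mult_le_mono1) simp
    then show ?thesis
      using Suc.prems(3) by simp
  qed
  moreover have "j < n \<or> j = n"
    using Suc.prems(2) by auto
  ultimately show ?case
    using Suc by (auto simp: nth_append)
qed

definition sweep :: "nat \<Rightarrow> (nat \<Rightarrow> int list) \<Rightarrow> nat \<Rightarrow> (int \<times> int) list" where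
  "sweep k \<sigma> n = concat (map (\<lambda>i. column_pair_path (2 * int i) (column_walk k (\<sigma> i))) [0..<n])"

definition sweep_jumps :: "nat \<Rightarrow> (nat \<Rightarrow> int list) \<Rightarrow> nat \<Rightarrow> ((int \<times> int) \<times> int) list" where
  "sweep_jumps k \<sigma> n = zip (block k) (block_signs (\<sigma> 0)) @
     concat (map (\<lambda>i. ((1, 0), 1) # zip (block k) (block_signs (\<sigma> (Suc i)))) [0..<n])"

definition Vt_jumps :: "nat \<Rightarrow> (nat \<Rightarrow> int list) \<Rightarrow> ((int \<times> int) \<times> int) list" where
  "Vt_jumps k \<sigma> = (let v = (2::nat)^(k-1) in
     ((0, int v), 1) # sweep_jumps k \<sigma> (v - 1) @ [((0, int v), 1), ((2 * int v - 1, 0), -1)])"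

lemma sweep_0 [simp]: "sweep k \<sigma> 0 = []"
  by (simp add: sweep_def)

lemma sweep_Suc: "sweep k \<sigma> (Suc n) = sweep k \<sigma> n @ column_pair_path (2 * int n) (column_walk k (\<sigma> n))"
  by (simp add: sweep_def)

lemma sweep_jumps_Suc:
  "sweep_jumps k \<sigma> (Suc n) = sweep_jumps k \<sigma> n @ ((1, 0), 1) # zip (block k) (block_signs (\<sigma> (Suc n)))"
  by (simp add: sweep_jumps_def)

lemma length_block: "length (block k) = 2 * length (Vp_dy k) + 1"
  by (simp add: block_def Vp_eq_map_Pair Vpp_eq_rev_Vp)

lemma length_block_signs: "length (block_signs ss) = 2 * length ss + 1"
  by (simp add: block_signs_def)

context
  fixes k :: nat and rr :: "nat \<Rightarrow> int" and \<sigma> :: "nat \<Rightarrow> int list"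
  assumes two_le_k: "2 \<le> k"
    and routes: "\<And>i. i < 2^(k-1) \<Longrightarrow> column_route k (\<sigma> i) (rr (Suc i))"
begin

lemma map_fst_Vt_jumps: "map fst (Vt_jumps k \<sigma>) = Vt k"
proof -
  define v :: nat where "v = 2^(k-1)"
  have block_jumps: "map fst (zip (block k) (block_signs (\<sigma> i))) = block k" if "i < v" for i
    using routes[of i] that by (simp add: v_def column_route_def length_block length_block_signs)
  have "map (\<lambda>i. (1, 0) # map fst (zip (block k) (block_signs (\<sigma> (Suc i))))) [0..<v - 1] =
      replicate (v - 1) ((1, 0) # block k)"
    using block_jumps by (intro nth_equalityI) auto
  moreover have "0 < v"
    by (simp add: v_def)
  ultimately show ?thesis
    using block_jumps[of 0] unfolding Vt_jumps_def Vt_def sweep_jumps_def Let_def v_def[symmetric]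
    by (simp add: map_concat comp_def)
qed

lemma signs_Vt_jumps: "set (map snd (Vt_jumps k \<sigma>)) \<subseteq> {-1, 1}"
proof -
  have "set (map snd (Vt_jumps k \<sigma>)) \<subseteq> {-1, 1} \<union> (\<Union>i<2^(k-1). set (block_signs (\<sigma> i)))"
    by (auto simp: Vt_jumps_def sweep_jumps_def Let_def image_subset_iff dest!: set_zip_rightD)
  moreover have "set (block_signs (\<sigma> i)) \<subseteq> {-1, 1}" if "i < 2^(k-1)" for i
    using routes[OF that] by (auto simp: column_route_def block_signs_def)
  ultimately show ?thesis
    by blast
qed

lemma exec_path_column_pair:
  "i < 2^(k-1) \<Longrightarrow> y = 2^(k-1) - 1 \<Longrightarrow>
    exec_path (x, y) (zip (block k) (block_signs (\<sigma> i))) = column_pair_path x (column_walk k (\<sigma> i))"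
  using exec_path_block routes by (simp add: column_route_def)

lemma last_sweep: "last (sweep k \<sigma> (Suc n)) = (2 * int n + 1, 2^(k-1) - 1)"
  by (simp add: sweep_def last_column_pair_path)

lemma exec_path_sweep_jumps:
  "n < 2^(k-1) \<Longrightarrow> exec_path (0, 2^(k-1) - 1) (sweep_jumps k \<sigma> n) = sweep k \<sigma> (Suc n)"
proof (induction n)
  case 0
  then show ?case
    by (simp add: exec_path_column_pair sweep_def sweep_jumps_def)
next
  case (Suc n)
  then have "exec_path (0, 2^(k-1) - 1) (sweep_jumps k \<sigma> (Suc n)) =
      sweep k \<sigma> (Suc n) @ exec_path (2 * int (Suc n), 2^(k-1) - 1) (zip (block k) (block_signs (\<sigma> (Suc n))))"
    using last_sweep[of n] by (simp add: sweep_jumps_Suc exec_path_append_jump)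
  also have "\<dots> = sweep k \<sigma> (Suc (Suc n))"
    using Suc.prems by (simp add: exec_path_column_pair sweep_Suc)
  finally show ?case .
qed

lemma exec_path_Vt_jumps:
  "exec_path (0, -1) (Vt_jumps k \<sigma>) = (0, -1) # sweep k \<sigma> (2^(k-1)) @ [(2^k - 1, 2^k - 1), (0, 2^k - 1)]"
proof -
  define v :: nat where "v = 2^(k-1)"
  have v: "0 < v" "(2::int)^k = 2 * int v"
    using two_power_pred[of k] two_le_k by (simp_all add: v_def)
  have "exec_path (0, -1) (Vt_jumps k \<sigma>) =
      (0, -1) # exec_path (0, int v - 1) (sweep_jumps k \<sigma> (v - 1) @ [((0, int v), 1), ((2 * int v - 1, 0), -1)])"
    unfolding Vt_jumps_def Let_def v_def by simp
  also have "\<dots> = (0, -1) # sweep k \<sigma> v @ [(2 * int v - 1, 2 * int v - 1), (0, 2 * int v - 1)]"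
    using v exec_path_sweep_jumps[of "v - 1"] last_sweep[of "v - 1"]
    by (simp add: exec_path_append_jump v_def)
  finally show ?thesis
    using v by (simp add: v_def)
qed

lemma length_column_walk: "i < 2^(k-1) \<Longrightarrow> length (column_walk k (\<sigma> i)) = 2^k - 1"
  using routes[of i] length_Vp_dy[of k] two_le_k one_less_power[of "2::nat" k]
  by (simp add: column_walk_def column_route_def)

lemma length_sweep: "n \<le> 2^(k-1) \<Longrightarrow> length (sweep k \<sigma> n) = n * (2 * (2^k - 1))"
  by (induction n) (simp_all add: sweep_Suc length_column_pair_path length_column_walk)

lemma set_sweep: "set (sweep k \<sigma> (2^(k-1))) = {0..2^k - 1} \<times> {0..2^k - 2}"
proof -
  have "set (sweep k \<sigma> (2^(k-1))) = (\<Union>i<2^(k-1). {2 * int i, 2 * int i + 1} \<times> {0..2^k - 2})"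
    using routes by (auto simp: sweep_def set_column_pair_path column_route_def atLeast0LessThan)
  also have "\<dots> = (\<Union>i<2^(k-1). {2 * int i, 2 * int i + 1}) \<times> {0..2^k - 2}"
    by blast
  also have "\<dots> = {0..2^k - 1} \<times> {0..2^k - 2}"
    using two_power_pred[of k] two_le_k by (simp add: UN_column_pairs)
  finally show ?thesis .
qed

lemma distinct_sweep: "distinct (sweep k \<sigma> (2^(k-1)))"
proof (rule card_distinct)
  have "card (set (sweep k \<sigma> (2^(k-1)))) = 2^k * (2^k - 1)"
    unfolding set_sweep by (simp add: card_cartesian_product nat_power_eq nat_diff_distrib)
  also have "\<dots> = length (sweep k \<sigma> (2^(k-1)))"
    unfolding length_sweep[OF order_refl] using two_le_k by (cases k) auto
  finally show "card (set (sweep k \<sigma> (2^(k-1)))) = length (sweep k \<sigma> (2^(k-1)))" .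
qed

lemma nth_sweep_mid_jump:
  assumes "1 \<le> i" and "i \<le> 2^(k-1)"
  shows "((0, -1) # sweep k \<sigma> (2^(k-1)) @ tail) ! mid_jump_index k i = (2 * int (i - 1), rr i)"
    and "((0, -1) # sweep k \<sigma> (2^(k-1)) @ tail) ! Suc (mid_jump_index k i) = (2 * int (i - 1) + 1, rr i)"
proof -
  define L :: nat where "L = 2^k - 1"
  define P where "P = column_walk k (\<sigma> (i - 1))"
  have "1 < (2::nat)^k"
    using two_le_k one_less_power[of "2::nat" k] by simp
  then have L: "1 \<le> L" "length (block k) + 1 = 2 * L" "length (Vp k) = L - 1"
    using length_Vp_dy[of k] two_le_k
    by (simp_all add: L_def length_block Vp_eq_map_Pair)
  have i: "i - 1 < 2^(k-1)"
    using assms by simp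
  have P: "P \<noteq> []" "length P = L" "last P = rr i"
    using i routes[OF i] length_column_walk[OF i] assms(1)
    by (simp_all add: P_def L_def column_route_def)
  have lengths: "\<And>j. j < 2^(k-1) \<Longrightarrow> length (column_pair_path (2 * int j) (column_walk k (\<sigma> j))) = 2 * L"
    by (simp add: length_column_pair_path length_column_walk L_def)
  note nth_block = nth_concat_map_upt[where f = "\<lambda>j. column_pair_path (2 * int j) (column_walk k (\<sigma> j))",
      OF lengths i, folded sweep_def]
  have last_in_column: "sweep k \<sigma> (2^(k-1)) ! ((i - 1) * (2 * L) + (L - 1)) = (2 * int (i - 1), rr i)"
    using nth_block[of "L - 1", folded P_def] nth_column_pair_path_last[OF P(1)] P L(1) by simp
  have turn: "sweep k \<sigma> (2^(k-1)) ! ((i - 1) * (2 * L) + L) = (2 * int (i - 1) + 1, rr i)"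
    using nth_block[of L, folded P_def] nth_column_pair_path_turn[OF P(1)] P L(1) by simp
  have "Suc (i - 1) * (2 * L) \<le> 2^(k-1) * (2 * L)"
    using i by (intro mult_le_mono1) simp
  moreover have "length (sweep k \<sigma> (2^(k-1))) = 2^(k-1) * (2 * L)"
    by (simp add: length_sweep L_def)
  ultimately have "(i - 1) * (2 * L) + (L - 1) < length (sweep k \<sigma> (2^(k-1)))"
    and "(i - 1) * (2 * L) + L < length (sweep k \<sigma> (2^(k-1)))"
    using L(1) by simp_all
  moreover have "mid_jump_index k i = Suc ((i - 1) * (2 * L) + (L - 1))"
    and "Suc (mid_jump_index k i) = Suc ((i - 1) * (2 * L) + L)"
    using L by (simp_all add: mid_jump_index_def)
  ultimately show "((0, -1) # sweep k \<sigma> (2^(k-1)) @ tail) ! mid_jump_index k i = (2 * int (i - 1), rr i)"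
      and "((0, -1) # sweep k \<sigma> (2^(k-1)) @ tail) ! Suc (mid_jump_index k i) = (2 * int (i - 1) + 1, rr i)"
    using last_in_column turn by (simp_all only: nth_Cons_Suc nth_append_left)
qed

lemma Vt_jumps_solution:
  "valid_exec (available k) (0, -1) (Vt k) (map snd (Vt_jumps k \<sigma>)) \<and>
    (let ps = positions (0, -1) (Vt k) (map snd (Vt_jumps k \<sigma>)); v = (2::int)^(k-1); w = (2::int)^k - 1 in
      (\<forall>i \<in> {1..2^(k-1)}.
         snd (ps ! mid_jump_index k i) = rr i \<and> snd (ps ! Suc (mid_jump_index k i)) = rr i) \<and>
      (\<forall>c r. 0 \<le> c \<and> c \<le> 2*v - 1 \<and> 0 \<le> r \<and> r \<le> w - 1 \<longrightarrow> (c, r) \<in> set ps) \<and>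
      (2*v - 1, w) \<in> set ps \<and>
      last ps = (0, w))"
proof -
  define v :: int where "v = 2^(k-1)"
  have v: "(2::int)^k = 2 * v" "0 < v"
    using two_power_pred[of k] two_le_k by (simp_all add: v_def)
  define S where "S = sweep k \<sigma> (2^(k-1))"
  define ps where "ps = positions (0, -1) (Vt k) (map snd (Vt_jumps k \<sigma>))"
  have ps: "ps = (0, -1) # S @ [(2 * v - 1, 2 * v - 1), (0, 2 * v - 1)]"
    unfolding ps_def positions_def map_fst_Vt_jumps[symmetric] zip_map_fst_snd v(1)[symmetric] S_def
    by (rule exec_path_Vt_jumps)
  have S: "set S = {0..2 * v - 1} \<times> {0..2 * v - 2}" "distinct S"
    using set_sweep distinct_sweep by (simp_all add: S_def v(1))
  have "length (map snd (Vt_jumps k \<sigma>)) = length (Vt k)"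
    by (metis length_map map_fst_Vt_jumps)
  moreover have "set (tl ps) \<subseteq> available k"
    using v(2) unfolding ps available_def region_def blocked_def Let_def v(1) v_def[symmetric]
    by (auto simp: S)
  moreover have "distinct ps"
    using v(2) unfolding ps by (auto simp: S)
  moreover have "snd (ps ! mid_jump_index k i) = rr i \<and> snd (ps ! Suc (mid_jump_index k i)) = rr i"
    if "i \<in> {1..2^(k-1)}" for i
    using that nth_sweep_mid_jump[of i, folded S_def] by (simp add: ps)
  ultimately show ?thesis
    using signs_Vt_jumps v(2)
    unfolding valid_exec_def Let_def ps_def[symmetric] v(1) v_def[symmetric]
    by (auto simp: ps S)
qed

end

(* The rows r_i need not be distinct: the blocks sweep disjoint pairs of columns. *)
theorem mainTheorem10:
  fixes k :: nat and rr :: "nat \<Rightarrow> int"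
  assumes "k \<ge> 2"
    and "inj_on rr {1..2^(k-1)}"
    and "\<forall>i \<in> {1..2^(k-1)}. even (rr i) \<and> 0 \<le> rr i \<and> rr i \<le> 2^k - 2"
  shows "\<exists>ss. valid_exec (available k) (0, -1) (Vt k) ss \<and>
    (let ps = positions (0, -1) (Vt k) ss; v = (2::int)^(k-1); w = (2::int)^k - 1 in
      (\<forall>i \<in> {1..2^(k-1)}.
         snd (ps ! mid_jump_index k i) = rr i \<and> snd (ps ! Suc (mid_jump_index k i)) = rr i) \<and>
      (\<forall>c r. 0 \<le> c \<and> c \<le> 2*v - 1 \<and> 0 \<le> r \<and> r \<le> w - 1 \<longrightarrow> (c, r) \<in> set ps) \<and>
      (2*v - 1, w) \<in> set ps \<and>
      last ps = (0, w))"
proof -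
  have "\<forall>i. \<exists>ss. i < 2^(k-1) \<longrightarrow> column_route k ss (rr (Suc i))"
  proof
    fix i
    show "\<exists>ss. i < 2^(k-1) \<longrightarrow> column_route k ss (rr (Suc i))"
      using assms(1,3) column_route_exists[of k "rr (Suc i)"] by force
  qed
  then obtain \<sigma> where "\<And>i. i < 2^(k-1) \<Longrightarrow> column_route k (\<sigma> i) (rr (Suc i))"
    by metis
  from Vt_jumps_solution[where rr = rr, OF assms(1) this] show ?thesis
    by blast
qed

end
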